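(* Let $G=(V,E)$ be a threshold graph. An edge $e\in E$ is threshold-safe (i.e., $G-e$ is a threshold graph) if and only if $e$ is neither the middle edge of an induced diamond nor a side edge of an induced paw in $G$.
   Context: A graph $G=(V,E)$ is threshold if there exist a labeling $\ell:V\to\mathbb{N}_0$ and $t\in\mathbb{N}_0$ such that $X\subseteq V$ is independent iff $\sum_{x\in X}\ell(x)\le t$. A diamond is $K_4$ minus an edge; its middle edge joins its two degree-3 vertices. A paw is the graph on $\{a,b,c,d\}$ with edges $ab,bc,cd,bd$; its side edges are $bc$ and $bd$. *)

theory Defs
  imports Main
begin

definition simple_graph :: "'a set \<Rightarrow> 'a set set \<Rightarrow> bool" where
  "simple_graph V E \<longleftrightarrow> finite V \<and> (\<forall>e\<in>E. e \<subseteq> V \<and> card e = 2)"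

definition independent :: "'a set set \<Rightarrow> 'a set \<Rightarrow> bool" where
  "independent E X \<longleftrightarrow> (\<forall>u\<in>X. \<forall>v\<in>X. {u, v} \<notin> E)"

definition threshold_graph :: "'a set \<Rightarrow> 'a set set \<Rightarrow> bool" where
  "threshold_graph V E \<longleftrightarrow>
     (\<exists>(l :: 'a \<Rightarrow> nat) (t :: nat). \<forall>X. X \<subseteq> V \<longrightarrow>
        (independent E X \<longleftrightarrow> (\<Sum>x\<in>X. l x) \<le> t))"

definition middle_edge_of_induced_diamond :: "'a set \<Rightarrow> 'a set set \<Rightarrow> 'a set \<Rightarrow> bool" where
  "middle_edge_of_induced_diamond V E e \<longleftrightarrow>
     (\<exists>a b c d. distinct [a, b, c, d] \<and> {a, b, c, d} \<subseteq> V \<and> e = {a, b} \<and>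
        {a, b} \<in> E \<and> {a, c} \<in> E \<and> {a, d} \<in> E \<and> {b, c} \<in> E \<and> {b, d} \<in> E \<and>
        {c, d} \<notin> E)"

definition side_edge_of_induced_paw :: "'a set \<Rightarrow> 'a set set \<Rightarrow> 'a set \<Rightarrow> bool" where
  "side_edge_of_induced_paw V E e \<longleftrightarrow>
     (\<exists>a b c d. distinct [a, b, c, d] \<and> {a, b, c, d} \<subseteq> V \<and>
        (e = {b, c} \<or> e = {b, d}) \<and>
        {a, b} \<in> E \<and> {b, c} \<in> E \<and> {c, d} \<in> E \<and> {b, d} \<in> E \<and>
        {a, c} \<notin> E \<and> {a, d} \<notin> E)"

end

(*
  By the Chvatal-Hammer characterisation, a finite graph is threshold iff it has no alternating
  4-cycle: vertices p, q, r, s with pq, rs edges and pr, qs non-edges (an induced 2K2, P4 or C4).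
  Necessity: the labels would give l p + l q, l r + l s > t >= l p + l r, l q + l s.
  Sufficiency: neighbourhoods are then nested, so a vertex of maximum degree is dominating or
  has an isolated non-neighbour; removing that vertex and extending a labelling of the rest
  gives one for the whole graph.

  Deleting an edge e of an alternating-4-cycle-free graph creates such a cycle exactly when e
  is one of its non-edges, say pr.  Both pq and rs survive and qs is absent, so the four
  vertices span a diamond with middle edge pr or a paw with side edge pr, according to which
  of ps, qr are edges (both absent would be an alternating 4-cycle q p r s already in G).
*)
theory Submission
  imports Defs
begin

definition alt_4_cycle :: "'a set set \<Rightarrow> 'a \<Rightarrow> 'a \<Rightarrow> 'a \<Rightarrow> 'a \<Rightarrow> bool" where
  "alt_4_cycle E p q r s \<longleftrightarrow>
     distinct [p, q, r, s] \<and> {p, q} \<in> E \<and> {r, s} \<in> E \<and> {p, r} \<notin> E \<and> {q, s} \<notin> E"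

definition alt_4_cycle_free :: "'a set \<Rightarrow> 'a set set \<Rightarrow> bool" where
  "alt_4_cycle_free V E \<longleftrightarrow>
     (\<forall>p\<in>V. \<forall>q\<in>V. \<forall>r\<in>V. \<forall>s\<in>V. \<not> alt_4_cycle E p q r s)"

definition neighbourhood :: "'a set \<Rightarrow> 'a set set \<Rightarrow> 'a \<Rightarrow> 'a set" where
  "neighbourhood V E v = {w \<in> V. {v, w} \<in> E}"

definition threshold_labelling :: "'a set \<Rightarrow> 'a set set \<Rightarrow> ('a \<Rightarrow> nat) \<Rightarrow> nat \<Rightarrow> bool" where
  "threshold_labelling V E l t \<longleftrightarrow> (\<forall>X. X \<subseteq> V \<longrightarrow> (independent E X \<longleftrightarrow> (\<Sum>x\<in>X. l x) \<le> t))"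

lemma threshold_graph_iff_labelling:
  "threshold_graph V E \<longleftrightarrow> (\<exists>l t. threshold_labelling V E l t)"
  unfolding threshold_graph_def threshold_labelling_def ..

lemma alt_4_cycle_swap: "alt_4_cycle E p q r s \<longleftrightarrow> alt_4_cycle E q p s r"
  unfolding alt_4_cycle_def by (auto simp: insert_commute)

lemma alt_4_cycle_free_subset:
  "alt_4_cycle_free V E \<Longrightarrow> W \<subseteq> V \<Longrightarrow> alt_4_cycle_free W E"
  unfolding alt_4_cycle_free_def by blast

lemma simple_graph_no_loop: "simple_graph V E \<Longrightarrow> {x} \<notin> E"
  unfolding simple_graph_def by fastforce

lemma independent_insert:
  assumes "\<And>x. {x} \<notin> E"
  shows "independent E (insert v X) \<longleftrightarrow> independent E X \<and> (\<forall>w\<in>X. {v, w} \<notin> E)"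
  using assms unfolding independent_def by (auto simp: insert_commute)

lemma independent_pair:
  assumes "\<And>x. {x} \<notin> E"
  shows "independent E {u, v} \<longleftrightarrow> {u, v} \<notin> E"
  using assms unfolding independent_def by (auto simp: insert_commute)

lemma threshold_labelling_imp_alt_4_cycle_free:
  assumes no_loop: "\<And>x. {x} \<notin> E" and l: "threshold_labelling V E l t"
  shows "alt_4_cycle_free V E"
  unfolding alt_4_cycle_free_def
proof (intro ballI notI)
  fix p q r s
  assume "p \<in> V" "q \<in> V" "r \<in> V" "s \<in> V" and "alt_4_cycle E p q r s"
  have indep_iff: "{u, v} \<notin> E \<longleftrightarrow> l u + l v \<le> t" if "u \<in> V" "v \<in> V" "u \<noteq> v" for u v
  proof -
    have "independent E {u, v} \<longleftrightarrow> (\<Sum>x\<in>{u, v}. l x) \<le> t"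
      using l that unfolding threshold_labelling_def by simp
    then show ?thesis using that independent_pair[OF no_loop] by simp
  qed
  have "l p + l r \<le> t" "l q + l s \<le> t" "\<not> l p + l q \<le> t" "\<not> l r + l s \<le> t"
    using \<open>alt_4_cycle E p q r s\<close> \<open>p \<in> V\<close> \<open>q \<in> V\<close> \<open>r \<in> V\<close> \<open>s \<in> V\<close>
      indep_iff[of p r] indep_iff[of q s] indep_iff[of p q] indep_iff[of r s]
    unfolding alt_4_cycle_def by auto
  then show False by linarith
qed

lemma neighbourhoods_nested:
  assumes no_loop: "\<And>x. {x} \<notin> E" and free: "alt_4_cycle_free V E"
    and "u \<in> V" "v \<in> V"
  shows "neighbourhood V E u - {v} \<subseteq> neighbourhood V E v
    \<or> neighbourhood V E v - {u} \<subseteq> neighbourhood V E u"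
proof (rule ccontr)
  assume "\<not> ?thesis"
  then obtain x y where x: "x \<in> neighbourhood V E u" "x \<noteq> v" "x \<notin> neighbourhood V E v"
    and y: "y \<in> neighbourhood V E v" "y \<noteq> u" "y \<notin> neighbourhood V E u"
    by blast
  have "alt_4_cycle E u x y v"
    using x y no_loop unfolding alt_4_cycle_def neighbourhood_def by (auto simp: insert_commute)
  then show False
    using free x y \<open>u \<in> V\<close> \<open>v \<in> V\<close> unfolding alt_4_cycle_free_def neighbourhood_def by blast
qed

lemma neighbourhood_Diff_subset_max_degree:
  assumes no_loop: "\<And>x. {x} \<notin> E" and free: "alt_4_cycle_free V E" and "finite V"
    and "v \<in> V" and max: "\<And>w. w \<in> V \<Longrightarrow> card (neighbourhood V E w) \<le> card (neighbourhood V E v)"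
    and "w \<in> V" "w \<noteq> v"
  shows "neighbourhood V E w - {v} \<subseteq> neighbourhood V E v"
  using neighbourhoods_nested[OF no_loop free \<open>w \<in> V\<close> \<open>v \<in> V\<close>]
proof
  let ?Nv = "neighbourhood V E v - {w}" and ?Nw = "neighbourhood V E w - {v}"
  assume sub: "?Nv \<subseteq> neighbourhood V E w"
  have fin: "finite (neighbourhood V E u)" for u
    using \<open>finite V\<close> unfolding neighbourhood_def by simp
  have "v \<in> neighbourhood V E w \<longleftrightarrow> w \<in> neighbourhood V E v"
    using \<open>v \<in> V\<close> \<open>w \<in> V\<close> unfolding neighbourhood_def by (simp add: insert_commute)
  then have "card ?Nw \<le> card ?Nv"
    using max[OF \<open>w \<in> V\<close>] by (auto simp: card_Diff_singleton_if intro: diff_le_mono)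
  moreover have "?Nv \<subseteq> ?Nw"
    using sub no_loop unfolding neighbourhood_def by auto
  ultimately have "?Nv = ?Nw"
    using fin by (intro card_seteq) auto
  then show ?thesis by blast
qed

lemma exists_isolated_or_dominating:
  assumes no_loop: "\<And>x. {x} \<notin> E" and free: "alt_4_cycle_free V E"
    and "finite V" "V \<noteq> {}"
  shows "\<exists>v\<in>V. neighbourhood V E v = {} \<or> neighbourhood V E v = V - {v}"
proof -
  let ?deg = "\<lambda>w. card (neighbourhood V E w)"
  have "Max (?deg ` V) \<in> ?deg ` V"
    using \<open>finite V\<close> \<open>V \<noteq> {}\<close> by simp
  then obtain v where "v \<in> V" and "?deg v = Max (?deg ` V)"
    by auto
  then have max: "?deg w \<le> ?deg v" if "w \<in> V" for w
    using \<open>finite V\<close> that by simp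
  have dominated: "neighbourhood V E w - {v} \<subseteq> neighbourhood V E v" if "w \<in> V" "w \<noteq> v" for w
    using neighbourhood_Diff_subset_max_degree[OF no_loop free \<open>finite V\<close> \<open>v \<in> V\<close>] max that by blast
  show ?thesis
  proof (cases "neighbourhood V E v = V - {v}")
    case False
    moreover have "neighbourhood V E v \<subseteq> V - {v}"
      using no_loop unfolding neighbourhood_def by auto
    ultimately obtain u where u: "u \<in> V" "u \<noteq> v" "u \<notin> neighbourhood V E v"
      by blast
    have "x \<notin> neighbourhood V E u" for x
    proof
      assume x: "x \<in> neighbourhood V E u"
      have "x \<noteq> v"
        using x u \<open>v \<in> V\<close> unfolding neighbourhood_def by (auto simp: insert_commute)
      then have "x \<in> neighbourhood V E v"
        using dominated[OF u(1,2)] x by blast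
      then have "x \<in> V" by (simp add: neighbourhood_def)
      have "u \<in> neighbourhood V E x - {v}"
        using x u unfolding neighbourhood_def by (auto simp: insert_commute)
      then show False
        using dominated[OF \<open>x \<in> V\<close> \<open>x \<noteq> v\<close>] u(3) by blast
    qed
    then show ?thesis using u(1) by blast
  qed (use \<open>v \<in> V\<close> in blast)
qed

lemma threshold_labelling_insert:
  assumes l: "threshold_labelling V E l t" and "v \<notin> V" "finite V"
    and extended: "\<And>Y. Y \<subseteq> V \<Longrightarrow> independent E (insert v Y) \<longleftrightarrow> c + 2 * (\<Sum>y\<in>Y. l y) \<le> 2 * t + 1"
  shows "threshold_labelling (insert v V) E (\<lambda>x. if x = v then c else 2 * l x) (2 * t + 1)"
  \<comment> \<open>doubling the old labels keeps their constraints intact under the odd threshold 2t+1\<close>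
  unfolding threshold_labelling_def
proof (intro allI impI)
  let ?l = "\<lambda>x. if x = v then c else 2 * l x"
  have doubled: "(\<Sum>x\<in>Y. ?l x) = 2 * (\<Sum>y\<in>Y. l y)" if "Y \<subseteq> V" for Y
    using that \<open>v \<notin> V\<close> by (auto simp: sum_distrib_left intro!: sum.cong)
  fix X
  assume X: "X \<subseteq> insert v V"
  show "independent E X \<longleftrightarrow> (\<Sum>x\<in>X. ?l x) \<le> 2 * t + 1"
  proof (cases "v \<in> X")
    case True
    let ?Y = "X - {v}"
    have "?Y \<subseteq> V" "finite X"
      using X \<open>finite V\<close> finite_subset by auto
    then have "(\<Sum>x\<in>X. ?l x) = c + 2 * (\<Sum>y\<in>?Y. l y)"
      using True doubled[of ?Y] by (simp add: sum.remove)
    moreover have "independent E X \<longleftrightarrow> independent E (insert v ?Y)"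
      using True by (simp add: insert_absorb)
    ultimately show ?thesis
      using extended[OF \<open>?Y \<subseteq> V\<close>] by simp
  next
    case False
    then have "X \<subseteq> V"
      using X by blast
    then show ?thesis
      using l doubled[of X] unfolding threshold_labelling_def by auto
  qed
qed

lemma threshold_labelling_insert_isolated:
  assumes no_loop: "\<And>x. {x} \<notin> E" and l: "threshold_labelling V E l t"
    and "v \<notin> V" "finite V" and isolated: "\<forall>w\<in>V. {v, w} \<notin> E"
  shows "threshold_labelling (insert v V) E (\<lambda>x. if x = v then 1 else 2 * l x) (2 * t + 1)"
proof (rule threshold_labelling_insert[OF l \<open>v \<notin> V\<close> \<open>finite V\<close>])
  fix Y
  assume "Y \<subseteq> V"
  then show "independent E (insert v Y) \<longleftrightarrow> 1 + 2 * (\<Sum>y\<in>Y. l y) \<le> 2 * t + 1"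
    using l isolated independent_insert[OF no_loop] unfolding threshold_labelling_def by auto
qed

lemma threshold_labelling_insert_dominating:
  assumes no_loop: "\<And>x. {x} \<notin> E" and l: "threshold_labelling V E l t"
    and "v \<notin> V" "finite V" and pos: "\<forall>x\<in>V. 0 < l x" and dominating: "\<forall>w\<in>V. {v, w} \<in> E"
  shows "threshold_labelling (insert v V) E (\<lambda>x. if x = v then 2 * t + 1 else 2 * l x) (2 * t + 1)"
proof (rule threshold_labelling_insert[OF l \<open>v \<notin> V\<close> \<open>finite V\<close>])
  fix Y
  assume "Y \<subseteq> V"
  then have "finite Y"
    using \<open>finite V\<close> finite_subset by blast
  have "independent E (insert v Y) \<longleftrightarrow> Y = {}"
    using \<open>Y \<subseteq> V\<close> dominating independent_insert[OF no_loop]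
    by (auto simp: independent_def)
  also have "\<dots> \<longleftrightarrow> (\<Sum>y\<in>Y. l y) = 0"
    using \<open>finite Y\<close> \<open>Y \<subseteq> V\<close> pos by (fastforce simp: sum_eq_0_iff)
  finally show "independent E (insert v Y) \<longleftrightarrow> 2 * t + 1 + 2 * (\<Sum>y\<in>Y. l y) \<le> 2 * t + 1"
    by simp
qed

lemma alt_4_cycle_free_imp_threshold_labelling:
  assumes no_loop: "\<And>x. {x} \<notin> E" and "finite V" "alt_4_cycle_free V E"
  shows "\<exists>l t. (\<forall>x\<in>V. 0 < l x) \<and> threshold_labelling V E l t"
  using \<open>finite V\<close> \<open>alt_4_cycle_free V E\<close>
proof (induction V rule: finite_remove_induct)
  case empty
  show ?case
    by (auto simp: threshold_labelling_def independent_def)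
next
  case (remove A)
  obtain v where "v \<in> A" and v: "neighbourhood A E v = {} \<or> neighbourhood A E v = A - {v}"
    using exists_isolated_or_dominating[OF no_loop remove.prems remove.hyps(1,2)] by blast
  then obtain l t where pos: "\<forall>x\<in>A - {v}. 0 < l x" and l: "threshold_labelling (A - {v}) E l t"
    using remove.IH alt_4_cycle_free_subset[OF remove.prems] by blast
  have A: "A = insert v (A - {v})" "v \<notin> A - {v}" "finite (A - {v})"
    using \<open>v \<in> A\<close> remove.hyps(1) by auto
  from v show ?case
  proof
    assume "neighbourhood A E v = {}"
    then have "\<forall>w\<in>A - {v}. {v, w} \<notin> E"
      unfolding neighbourhood_def by auto
    then have "threshold_labelling A E (\<lambda>x. if x = v then 1 else 2 * l x) (2 * t + 1)"
      using threshold_labelling_insert_isolated[OF no_loop l A(2,3)] A(1) by simp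
    then show ?case
      using pos by (intro exI[of _ "\<lambda>x. if x = v then 1 else 2 * l x"] exI) auto
  next
    assume "neighbourhood A E v = A - {v}"
    then have "\<forall>w\<in>A - {v}. {v, w} \<in> E"
      unfolding neighbourhood_def by auto
    then have "threshold_labelling A E (\<lambda>x. if x = v then 2 * t + 1 else 2 * l x) (2 * t + 1)"
      using threshold_labelling_insert_dominating[OF no_loop l A(2,3) pos] A(1) by simp
    then show ?case
      using pos by (intro exI[of _ "\<lambda>x. if x = v then 2 * t + 1 else 2 * l x"] exI) auto
  qed
qed

theorem threshold_graph_iff_alt_4_cycle_free:
  assumes "simple_graph V E"
  shows "threshold_graph V E \<longleftrightarrow> alt_4_cycle_free V E"
proof -
  have no_loop: "\<And>x. {x} \<notin> E"
    using simple_graph_no_loop[OF assms] .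
  have "finite V"
    using assms unfolding simple_graph_def by simp
  show ?thesis
    unfolding threshold_graph_iff_labelling
    using threshold_labelling_imp_alt_4_cycle_free[OF no_loop]
      alt_4_cycle_free_imp_threshold_labelling[OF no_loop \<open>finite V\<close>] by blast
qed

lemma simple_graph_Diff: "simple_graph V E \<Longrightarrow> simple_graph V (E - F)"
  unfolding simple_graph_def by blast

lemma middle_edge_of_induced_diamond_imp_alt_4_cycle:
  assumes "middle_edge_of_induced_diamond V E e"
  shows "\<not> alt_4_cycle_free V (E - {e})"
proof -
  obtain a b c d where "distinct [a, b, c, d]" "{a, b, c, d} \<subseteq> V" "e = {a, b}"
      "{a, c} \<in> E" "{b, d} \<in> E" "{c, d} \<notin> E"
    using assms unfolding middle_edge_of_induced_diamond_def by blast
  then have "alt_4_cycle (E - {e}) a c b d"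
    unfolding alt_4_cycle_def by (auto simp: doubleton_eq_iff)
  then show ?thesis
    using \<open>{a, b, c, d} \<subseteq> V\<close> unfolding alt_4_cycle_free_def by blast
qed

lemma side_edge_of_induced_paw_imp_alt_4_cycle:
  assumes "side_edge_of_induced_paw V E e"
  shows "\<not> alt_4_cycle_free V (E - {e})"
proof -
  obtain a b c d where facts: "distinct [a, b, c, d]" "{a, b} \<in> E" "{c, d} \<in> E" "{d, c} \<in> E"
      "{a, c} \<notin> E" "{a, d} \<notin> E" and "{a, b, c, d} \<subseteq> V" "e = {b, c} \<or> e = {b, d}"
    using assms unfolding side_edge_of_induced_paw_def by (auto simp: insert_commute)
  from \<open>e = {b, c} \<or> e = {b, d}\<close>
  have "alt_4_cycle (E - {e}) a b d c \<or> alt_4_cycle (E - {e}) a b c d"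
    by (rule disj_forward) (use facts in \<open>auto simp: alt_4_cycle_def doubleton_eq_iff\<close>)
  then show ?thesis
    using \<open>{a, b, c, d} \<subseteq> V\<close> unfolding alt_4_cycle_free_def by blast
qed

lemma alt_4_cycle_of_removed_chord:
  assumes free: "alt_4_cycle_free V E" and V: "{p, q, r, s} \<subseteq> V"
    and "{p, r} \<in> E" and cycle: "alt_4_cycle (E - {{p, r}}) p q r s"
  shows "middle_edge_of_induced_diamond V E {p, r} \<or> side_edge_of_induced_paw V E {p, r}"
proof -
  have "distinct [p, q, r, s]" "{p, q} \<in> E" "{r, s} \<in> E" "{q, s} \<notin> E"
    using cycle unfolding alt_4_cycle_def by auto
  note facts = this \<open>{p, r} \<in> E\<close> V
  have "\<not> alt_4_cycle E q p r s"
    using free V unfolding alt_4_cycle_free_def by blast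
  then consider "{p, s} \<in> E" "{q, r} \<in> E" | "{p, s} \<in> E" "{q, r} \<notin> E" | "{p, s} \<notin> E" "{q, r} \<in> E"
    using facts unfolding alt_4_cycle_def by (auto simp: insert_commute)
  then show ?thesis
  proof cases
    case 1
    then have "middle_edge_of_induced_diamond V E {p, r}"
      unfolding middle_edge_of_induced_diamond_def using facts
      by (intro exI[of _ p] exI[of _ r] exI[of _ q] exI[of _ s]) (auto simp: insert_commute)
    then show ?thesis ..
  next
    case 2
    then have "side_edge_of_induced_paw V E {p, r}"
      unfolding side_edge_of_induced_paw_def using facts
      by (intro exI[of _ q] exI[of _ p] exI[of _ r] exI[of _ s]) (auto simp: insert_commute)
    then show ?thesis ..
  next
    case 3
    then have "side_edge_of_induced_paw V E {p, r}"
      unfolding side_edge_of_induced_paw_def using facts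
      by (intro exI[of _ s] exI[of _ r] exI[of _ p] exI[of _ q]) (auto simp: insert_commute)
    then show ?thesis ..
  qed
qed

lemma alt_4_cycle_free_Diff_edge_iff:
  assumes free: "alt_4_cycle_free V E" and "e \<in> E"
  shows "alt_4_cycle_free V (E - {e}) \<longleftrightarrow>
           \<not> middle_edge_of_induced_diamond V E e \<and> \<not> side_edge_of_induced_paw V E e"
proof
  assume "alt_4_cycle_free V (E - {e})"
  then show "\<not> middle_edge_of_induced_diamond V E e \<and> \<not> side_edge_of_induced_paw V E e"
    using middle_edge_of_induced_diamond_imp_alt_4_cycle side_edge_of_induced_paw_imp_alt_4_cycle
    by blast
next
  assume no_shape: "\<not> middle_edge_of_induced_diamond V E e \<and> \<not> side_edge_of_induced_paw V E e"
  show "alt_4_cycle_free V (E - {e})"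
    unfolding alt_4_cycle_free_def
  proof (intro ballI notI)
    fix p q r s
    assume V: "p \<in> V" "q \<in> V" "r \<in> V" "s \<in> V" and cycle: "alt_4_cycle (E - {e}) p q r s"
    have "\<not> alt_4_cycle E p q r s"
      using free V unfolding alt_4_cycle_free_def by blast
    then have "e = {p, r} \<or> e = {q, s}"
      using cycle unfolding alt_4_cycle_def by auto
    then obtain p' q' r' s' where
      "{p', q', r', s'} \<subseteq> V" "e = {p', r'}" "alt_4_cycle (E - {e}) p' q' r' s'"
      using cycle alt_4_cycle_swap[of "E - {e}" p q r s] V by blast
    then show False
      using alt_4_cycle_of_removed_chord[OF free] \<open>e \<in> E\<close> no_shape by blast
  qed
qed

theorem lemma4p3:
  fixes V :: "'a set" and E :: "'a set set" and e :: "'a set"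
  assumes "simple_graph V E"
    and "threshold_graph V E"
    and "e \<in> E"
  shows "threshold_graph V (E - {e}) \<longleftrightarrow>
           \<not> middle_edge_of_induced_diamond V E e \<and> \<not> side_edge_of_induced_paw V E e"
proof -
  have "alt_4_cycle_free V E"
    using assms(1,2) threshold_graph_iff_alt_4_cycle_free by blast
  moreover have "threshold_graph V (E - {e}) \<longleftrightarrow> alt_4_cycle_free V (E - {e})"
    using simple_graph_Diff[OF assms(1)] threshold_graph_iff_alt_4_cycle_free by blast
  ultimately show ?thesis
    using alt_4_cycle_free_Diff_edge_iff assms(3) by blast
qed

end
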